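(* Let $G$ be a group in which every non-abelian subgroup $H$ satisfies $C_G(H)\le H$, and let $N$ be a finite normal subgroup of $G$. Then $C_G(N)$ contains every element of $G$ of infinite order.
   Context: $C_G(H)$ denotes the centralizer of $H$ in $G$. *)

theory Defs
  imports "HOL-Algebra.Algebra"
begin

definition centralizer :: "('a, 'b) monoid_scheme \<Rightarrow> 'a set \<Rightarrow> 'a set" where
  "centralizer G H = {g \<in> carrier G. \<forall>h\<in>H. g \<otimes>\<^bsub>G\<^esub> h = h \<otimes>\<^bsub>G\<^esub> g}"

end

theory Submission
  imports Defs
begin

(*
  Conjugation by g permutes the finite set N, so some power c = g^m (m > 0) centralizes N.
  If g itself does not centralize N, then neither does g^(m+1) = g c, so the subgroup
  H = N <g^(m+1)> is non-abelian; c commutes with N and with g^(m+1), hence c \<in> C_G(H) \<le> H.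
  Writing c = n g^((m+1)k) with n \<in> N puts the power g^(m-(m+1)k) into the finite
  group N, which forces m = (m+1)k because g has infinite order: impossible for m > 0.
*)

lemma (in group) conj_mult_eq_conj_imp_commute:
  assumes "u \<in> carrier G" "v \<in> carrier G" "x \<in> carrier G"
    and "(u \<otimes> v) \<otimes> x \<otimes> inv (u \<otimes> v) = u \<otimes> x \<otimes> inv u"
  shows "v \<otimes> x = x \<otimes> v"
proof -
  have "u \<otimes> (v \<otimes> x \<otimes> inv v) \<otimes> inv u = u \<otimes> x \<otimes> inv u"
    using assms by (simp add: inv_mult_group m_assoc)
  then have "v \<otimes> x \<otimes> inv v = x"
    using assms(1-3) by simp
  then show ?thesis
    using assms(2,3) by (metis inv_solve_right m_closed)
qed

lemma (in group) inv_commute: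
  assumes "g \<in> carrier G" "h \<in> carrier G" "g \<otimes> h = h \<otimes> g"
  shows "inv g \<otimes> h = h \<otimes> inv g"
proof -
  have "inv g \<otimes> h = inv g \<otimes> (h \<otimes> g) \<otimes> inv g"
    using assms by (simp add: m_assoc)
  also have "\<dots> = inv g \<otimes> (g \<otimes> h) \<otimes> inv g"
    using assms(3) by simp
  also have "\<dots> = h \<otimes> inv g"
    using assms(1,2) by (simp add: m_assoc[symmetric])
  finally show ?thesis .
qed

lemma (in group) subgroup_centralizer:
  assumes "H \<subseteq> carrier G"
  shows "subgroup (centralizer G H) G"
proof (rule subgroupI)
  fix g assume "g \<in> centralizer G H"
  with assms show "inv g \<in> centralizer G H"
    unfolding centralizer_def using inv_commute by auto
next
  fix g h assume "g \<in> centralizer G H" "h \<in> centralizer G H"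
  have "g \<otimes> h \<otimes> x = x \<otimes> (g \<otimes> h)" if "x \<in> H" for x
  proof -
    have gh: "g \<in> carrier G" "h \<in> carrier G" "x \<in> carrier G"
      using assms that \<open>g \<in> centralizer G H\<close> \<open>h \<in> centralizer G H\<close>
      by (auto simp: centralizer_def)
    have "g \<otimes> h \<otimes> x = g \<otimes> (x \<otimes> h)"
      using gh \<open>h \<in> centralizer G H\<close> that by (simp add: m_assoc centralizer_def)
    also have "\<dots> = x \<otimes> g \<otimes> h"
      using gh \<open>g \<in> centralizer G H\<close> that by (simp add: m_assoc[symmetric] centralizer_def)
    finally show ?thesis
      using gh by (simp add: m_assoc)
  qed
  then show "g \<otimes> h \<in> centralizer G H"
    using \<open>g \<in> centralizer G H\<close> \<open>h \<in> centralizer G H\<close> by (auto simp: centralizer_def)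
qed (use assms in \<open>auto simp: centralizer_def subsetD intro!: exI[of _ \<one>]\<close>)

lemma (in group) mem_centralizer_iff_subset:
  assumes "c \<in> carrier G" "A \<subseteq> carrier G"
  shows "c \<in> centralizer G A \<longleftrightarrow> A \<subseteq> centralizer G {c}"
  using assms by (auto simp: centralizer_def)

lemma (in group) centralizer_set_mult:
  assumes "c \<in> centralizer G A" "c \<in> centralizer G B" "A \<subseteq> carrier G" "B \<subseteq> carrier G"
  shows "c \<in> centralizer G (A <#> B)"
proof -
  have c: "c \<in> carrier G"
    using assms(1) by (simp add: centralizer_def)
  have "A <#> B \<subseteq> centralizer G {c} <#> centralizer G {c}"
    using assms mem_centralizer_iff_subset[OF c] by (intro mono_set_mult) auto
  also have "\<dots> = centralizer G {c}"
    using c by (simp add: subgroup_mult_id subgroup_centralizer)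
  finally show ?thesis
    using assms(3,4) c by (simp add: mem_centralizer_iff_subset setmult_subset_G)
qed

lemma (in group) mem_centralizer_generate_singleton:
  assumes "a \<in> carrier G" "c \<in> carrier G" "c \<otimes> a = a \<otimes> c"
  shows "c \<in> centralizer G (generate G {a})"
proof -
  have "generate G {a} \<subseteq> centralizer G {c}"
    using assms by (intro generate_subgroup_incl subgroup_centralizer) (auto simp: centralizer_def)
  then show ?thesis
    using assms(1,2) generate_incl[of "{a}"] by (simp add: mem_centralizer_iff_subset)
qed

lemma (in group) mem_centralizer_of_mult:
  assumes "A \<subseteq> carrier G" "g \<in> carrier G" "c \<in> centralizer G A" "c \<otimes> g \<in> centralizer G A"
  shows "g \<in> centralizer G A"
proof -
  have c: "c \<in> carrier G"
    using assms(3) by (simp add: centralizer_def)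
  interpret C: subgroup "centralizer G A" G
    by (rule subgroup_centralizer[OF assms(1)])
  have "inv c \<otimes> (c \<otimes> g) \<in> centralizer G A"
    by (rule C.m_closed[OF C.m_inv_closed[OF assms(3)] assms(4)])
  then show ?thesis
    using assms(2) c by (simp add: m_assoc[symmetric])
qed

lemma (in group) finite_normal_centralized_by_pow:
  assumes g: "g \<in> carrier G" and N: "N \<lhd> G" "finite N"
  shows "\<exists>d::nat. d > 0 \<and> g [^] d \<in> centralizer G N"
proof -
  define conjugate where "conjugate k = (\<lambda>x\<in>N. g [^] k \<otimes> x \<otimes> inv (g [^] k))" for k :: nat
  have "conjugate k \<in> N \<rightarrow>\<^sub>E N" for k
    unfolding conjugate_def restrict_PiE_iff using normal.inv_op_closed2[OF N(1) nat_pow_closed[OF g]] by blast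
  then have "range conjugate \<subseteq> N \<rightarrow>\<^sub>E N"
    by blast
  moreover have "finite (N \<rightarrow>\<^sub>E N)"
    using N(2) by (simp add: finite_PiE)
  ultimately have "finite (range conjugate)"
    by (rule finite_subset)
  then have "\<not> inj conjugate"
    using finite_imageD by fastforce
  then obtain a' b' where "a' \<noteq> b'" "conjugate a' = conjugate b'"
    unfolding inj_def by blast
  then obtain a b where "a < b" "conjugate a = conjugate b"
    by (cases a' b' rule: linorder_cases) auto
  have gb: "g [^] b = g [^] a \<otimes> g [^] (b - a)"
    using g \<open>a < b\<close> by (simp add: nat_pow_mult)
  have "g [^] (b - a) \<otimes> x = x \<otimes> g [^] (b - a)" if x: "x \<in> N" for x
  proof (rule conj_mult_eq_conj_imp_commute[of "g [^] a"])
    show "x \<in> carrier G"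
      using subgroup.mem_carrier[OF normal_imp_subgroup[OF N(1)] x] .
    have "g [^] b \<otimes> x \<otimes> inv (g [^] b) = g [^] a \<otimes> x \<otimes> inv (g [^] a)"
      using fun_cong[OF \<open>conjugate a = conjugate b\<close>, of x] x by (simp add: conjugate_def)
    then show "g [^] a \<otimes> g [^] (b - a) \<otimes> x \<otimes> inv (g [^] a \<otimes> g [^] (b - a))
        = g [^] a \<otimes> x \<otimes> inv (g [^] a)"
      by (simp only: gb)
  qed (use g in simp_all)
  then have "g [^] (b - a) \<in> centralizer G N"
    using g by (simp add: centralizer_def)
  moreover have "b - a > 0"
    using \<open>a < b\<close> by simp
  ultimately show ?thesis
    by blast
qed

lemma (in group) int_pow_mem_finite_subgroup_imp_zero:
  assumes g: "g \<in> carrier G" and "ord g = 0" and N: "subgroup N G" "finite N"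
    and "g [^] (j::int) \<in> N"
  shows "j = 0"
proof (rule ccontr)
  assume "j \<noteq> 0"
  have "inj (\<lambda>k::nat. (g [^] j) [^] int k)"
  proof (rule injI)
    fix a b :: nat assume "(g [^] j) [^] int a = (g [^] j) [^] int b"
    then have "int (ord g) dvd j * int b - j * int a"
      using g by (simp add: int_pow_pow int_pow_eq)
    then show "a = b" using \<open>ord g = 0\<close> \<open>j \<noteq> 0\<close> by simp
  qed
  moreover have "range (\<lambda>k::nat. (g [^] j) [^] int k) \<subseteq> N"
    using subgroup_int_pow_closed[OF N(1) \<open>g [^] j \<in> N\<close>] by blast
  ultimately show False
    using N(2) finite_imageD finite_subset infinite_UNIV_nat by metis
qed

lemma (in group) set_mult_generate_singleton_incl:
  assumes "subgroup N G" "a \<in> carrier G"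
  shows "N \<subseteq> N <#> generate G {a}" and "a \<in> N <#> generate G {a}"
proof -
  have "x \<otimes> \<one> \<in> N <#> generate G {a}" if "x \<in> N" for x
    unfolding set_mult_def using that generate.one by blast
  then show "N \<subseteq> N <#> generate G {a}"
    using subgroup.mem_carrier[OF assms(1)] by force
  have "\<one> \<otimes> a \<in> N <#> generate G {a}"
    unfolding set_mult_def using subgroup.one_closed[OF assms(1)] generate.incl[of a "{a}"] by blast
  then show "a \<in> N <#> generate G {a}"
    using assms(2) by simp
qed

lemma (in group) pow_notin_finite_mult_generate_Suc_pow:
  assumes g: "g \<in> carrier G" and "ord g = 0" and N: "subgroup N G" "finite N" and "m > 0"
  shows "g [^] m \<notin> N <#> generate G {g [^] Suc m}"
proof
  assume "g [^] m \<in> N <#> generate G {g [^] Suc m}"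
  then obtain n k where n: "n \<in> N" and eq: "g [^] m = n \<otimes> (g [^] Suc m) [^] (k::int)"
    using g by (auto simp: set_mult_def generate_pow)
  have "(g [^] Suc m) [^] k = g [^] (int (Suc m) * k)"
    using g by (simp add: int_pow_pow flip: int_pow_int)
  with eq have "n = g [^] int m \<otimes> inv (g [^] (int (Suc m) * k))"
    using g subgroup.mem_carrier[OF N(1) n] by (simp add: inv_solve_right int_pow_int)
  then have "n = g [^] (int m - int (Suc m) * k)"
    using g by (simp add: int_pow_diff)
  with n have "g [^] (int m - int (Suc m) * k) \<in> N"
    by simp
  then have "int m - int (Suc m) * k = 0"
    by (rule int_pow_mem_finite_subgroup_imp_zero[OF g \<open>ord g = 0\<close> N])
  then have "int m = int (Suc m) * k"
    by simp
  then have "Suc m dvd m"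
    by (metis dvdI int_dvd_int_iff)
  then show False
    using \<open>m > 0\<close> dvd_imp_le by (metis Suc_n_not_le_n)
qed

theorem lemma2p4:
  fixes G (structure) and N :: "'a set"
  assumes "group G"
    and "\<And>H. \<lbrakk>subgroup H G; \<not> (\<forall>x\<in>H. \<forall>y\<in>H. x \<otimes> y = y \<otimes> x)\<rbrakk>
           \<Longrightarrow> centralizer G H \<subseteq> H"
    and "N \<lhd> G" and "finite N"
  shows "{g \<in> carrier G. group.ord G g = 0} \<subseteq> centralizer G N"
proof (rule subsetI, elim CollectE conjE)
  interpret group G by (rule assms(1))
  have N: "subgroup N G" "N \<subseteq> carrier G"
    using assms(3) normal_imp_subgroup subgroup.subset by blast+
  fix g assume g: "g \<in> carrier G" and "ord g = 0"
  obtain m :: nat where "m > 0" and c: "g [^] m \<in> centralizer G N"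
    using finite_normal_centralized_by_pow[OF g assms(3,4)] by blast
  define H where "H = N <#> generate G {g [^] Suc m}"
  have "subgroup H G"
    unfolding H_def using g by (intro mult_norm_subgroup assms(3) generate_is_subgroup) auto
  have "g [^] m \<in> centralizer G (generate G {g [^] Suc m})"
    using g by (intro mem_centralizer_generate_singleton nat_pow_comm) (simp_all del: nat_pow_Suc)
  then have "g [^] m \<in> centralizer G H"
    unfolding H_def using c N g generate_incl[of "{g [^] Suc m}"]
    by (intro centralizer_set_mult) simp_all
  moreover have "g [^] m \<notin> H"
    unfolding H_def by (rule pow_notin_finite_mult_generate_Suc_pow[OF g \<open>ord g = 0\<close> N(1) assms(4) \<open>m > 0\<close>])
  ultimately have "\<forall>x\<in>H. \<forall>y\<in>H. x \<otimes> y = y \<otimes> x"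
    using assms(2)[OF \<open>subgroup H G\<close>] by blast
  then have "g [^] Suc m \<otimes> x = x \<otimes> g [^] Suc m" if "x \<in> N" for x
    using that set_mult_generate_singleton_incl[OF N(1), of "g [^] Suc m"] g unfolding H_def by blast
  then have "g [^] m \<otimes> g \<in> centralizer G N"
    using g by (simp add: centralizer_def)
  then show "g \<in> centralizer G N"
    using mem_centralizer_of_mult[OF N(2) g c] by blast
qed

end
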